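(* Let $X_1,\dots,X_n$ be mild $E\mathcal M$-simplicial sets. Then the natural map $\Phi\colon E\mathrm{Inj}(n\times\omega,\omega)\times_{E\mathcal M^n}X_1\times\dots\times X_n\to X_1\times\dots\times X_n$ has image exactly the unbiased box product $X_1\boxtimes\dots\boxtimes X_n$ and is an isomorphism onto it.
   Context: $\omega=\{1,2,3,\dots\}$, $\mathcal M$ the monoid of injections $\omega\to\omega$; for $A\subset\omega$, $\mathcal M_A$ is the submonoid of injections fixing $A$ elementwise; $A$ is co-infinite if $\omega\setminus A$ is infinite. $E\mathcal M$ is the simplicial monoid with $(E\mathcal M)_n=\mathcal M^{1+n}$, pointwise multiplication, structure maps by precomposition in $\{0,\dots,n\}$. For an $E\mathcal M$-simplicial set $X$, $x\in X_n$ is $k$-supported on $A$ ($0\le k\le n$) if $i_k(u).x=x$ for all $u\in\mathcal M_A$, with $i_k\colon\mathcal M\to\mathcal M^{1+n}$ the inclusion of the $(1+k)$-th factor. $X$ is mild if each simplex $x\in X_n$ is, for each $k$, $k$-supported on some co-infinite set. The unbiased box product $X_1\boxtimes\dots\boxtimes X_n\subset X_1\times\dots\times X_n$ consists in degree $m$ of those $(x_1,\dots,x_n)$ such that for each $0\le k\le m$ there are pairwise disjoint $A_k^{(1)},\dots,A_k^{(n)}\subset\omega$ with $\bigcup_iA_k^{(i)}$ co-infinite and $x_i$ $k$-supported on $A_k^{(i)}$. $E\mathrm{Inj}(n\times\omega,\omega)$ has $m$-simplices the tuples $(f_0,\dots,f_m)$ of injections $n\times\omega\to\omega$. The quotient $E\mathrm{Inj}(n\times\omega,\omega)\times_{E\mathcal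 M^n}X_1\times\dots\times X_n$ of $E\mathrm{Inj}(n\times\omega,\omega)\times X_1\times\dots\times X_n$ is by the equivalence relation generated on $m$-simplices by $(f_0,\dots,f_m;u_1.x_1,\dots,u_n.x_n)\sim(f_0\circ(u_1^{(0)}\amalg\dots\amalg u_n^{(0)}),\dots,f_m\circ(u_1^{(m)}\amalg\dots\amalg u_n^{(m)});x_1,\dots,x_n)$ for $u_i=(u_i^{(0)},\dots,u_i^{(m)})\in(E\mathcal M)_m$; $E\mathcal M$ acts by postcomposition. $\Phi[f_0,\dots,f_m;x_1,\dots,x_n]=((f_0\iota_1,\dots,f_m\iota_1).x_1,\dots,(f_0\iota_n,\dots,f_m\iota_n).x_n)$ with $\iota_j(t)=(j,t)$. *)

theory Defs
  imports Main
begin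

text \<open>omega is modelled by the type nat (an infinite countable set; only its
  bijection class matters).  Injections of omega: inj u.\<close>

text \<open>(EM)_m = M^(1+m): lists of length m+1 of injections.\<close>
definition em_elem :: "nat \<Rightarrow> (nat \<Rightarrow> nat) list \<Rightarrow> bool" where
  "em_elem m u \<longleftrightarrow> length u = Suc m \<and> (\<forall>f\<in>set u. inj f)"

text \<open>Simplicial operators alpha : [k] -> [n] (monotone), as lists
  [alpha 0, ..., alpha k].\<close>
definition simp_op :: "nat \<Rightarrow> nat list \<Rightarrow> bool" where
  "simp_op n \<alpha> \<longleftrightarrow> \<alpha> \<noteq> [] \<and> sorted \<alpha> \<and> (\<forall>i\<in>set \<alpha>. i \<le> n)"

record 'a emsset =
  simp :: "nat \<Rightarrow> 'a set"
  smap :: "nat \<Rightarrow> nat list \<Rightarrow> 'a \<Rightarrow> 'a"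
  sact :: "nat \<Rightarrow> (nat \<Rightarrow> nat) list \<Rightarrow> 'a \<Rightarrow> 'a"

definition em_sset :: "'a emsset \<Rightarrow> bool" where
  "em_sset X \<longleftrightarrow>
     (\<forall>n \<alpha> x. simp_op n \<alpha> \<and> x \<in> simp X n \<longrightarrow> smap X n \<alpha> x \<in> simp X (length \<alpha> - 1)) \<and>
     (\<forall>n x. x \<in> simp X n \<longrightarrow> smap X n [0..<Suc n] x = x) \<and>
     (\<forall>n \<alpha> \<beta> x. simp_op n \<alpha> \<and> simp_op (length \<alpha> - 1) \<beta> \<and> x \<in> simp X n \<longrightarrow>
        smap X (length \<alpha> - 1) \<beta> (smap X n \<alpha> x) = smap X n (map (\<lambda>i. \<alpha> ! i) \<beta>) x) \<and>
     (\<forall>m u x. em_elem m u \<and> x \<in> simp X m \<longrightarrow> sact X m u x \<in> simp X m) \<and>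
     (\<forall>m x. x \<in> simp X m \<longrightarrow> sact X m (replicate (Suc m) id) x = x) \<and>
     (\<forall>m u v x. em_elem m u \<and> em_elem m v \<and> x \<in> simp X m \<longrightarrow>
        sact X m u (sact X m v x) = sact X m (map2 (\<circ>) u v) x) \<and>
     (\<forall>n \<alpha> u x. simp_op n \<alpha> \<and> em_elem n u \<and> x \<in> simp X n \<longrightarrow>
        smap X n \<alpha> (sact X n u x) = sact X (length \<alpha> - 1) (map (\<lambda>i. u ! i) \<alpha>) (smap X n \<alpha> x))"

definition incl_k :: "nat \<Rightarrow> nat \<Rightarrow> (nat \<Rightarrow> nat) \<Rightarrow> (nat \<Rightarrow> nat) list" where
  "incl_k m k u = (replicate (Suc m) id)[k := u]"

definition ksupp :: "'a emsset \<Rightarrow> nat \<Rightarrow> nat \<Rightarrow> nat set \<Rightarrow> 'a \<Rightarrow> bool" where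
  "ksupp X m k A x \<longleftrightarrow> (\<forall>u. inj u \<and> (\<forall>a\<in>A. u a = a) \<longrightarrow> sact X m (incl_k m k u) x = x)"

definition mild :: "'a emsset \<Rightarrow> bool" where
  "mild X \<longleftrightarrow> (\<forall>m x k. x \<in> simp X m \<and> k \<le> m \<longrightarrow> (\<exists>A. infinite (- A) \<and> ksupp X m k A x))"

definition box :: "'a emsset list \<Rightarrow> nat \<Rightarrow> 'a list set" where
  "box Xs m = {xs. length xs = length Xs \<and> (\<forall>i<length Xs. xs ! i \<in> simp (Xs ! i) m) \<and>
     (\<forall>k\<le>m. \<exists>A :: nat \<Rightarrow> nat set.
        (\<forall>i<length Xs. \<forall>j<length Xs. i \<noteq> j \<longrightarrow> A i \<inter> A j = {}) \<and>
        infinite (- (\<Union>i<length Xs. A i)) \<and>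
        (\<forall>i<length Xs. ksupp (Xs ! i) m k (A i) (xs ! i)))}"

text \<open>An injection n x omega -> omega is given as the list of its restrictions
  f o iota_j (j < n), jointly injective.\<close>
definition einj :: "nat \<Rightarrow> (nat \<Rightarrow> nat) list \<Rightarrow> bool" where
  "einj n f \<longleftrightarrow> length f = n \<and> inj_on (\<lambda>(j, t). (f ! j) t) ({..<n} \<times> UNIV)"

text \<open>m-simplices of EInj(n x omega, omega) x X_1 x ... x X_n.\<close>
definition qcar :: "'a emsset list \<Rightarrow> nat \<Rightarrow> ((nat \<Rightarrow> nat) list list \<times> 'a list) set" where
  "qcar Xs m = {(fs, xs). length fs = Suc m \<and> (\<forall>f\<in>set fs. einj (length Xs) f) \<and>
      length xs = length Xs \<and> (\<forall>i<length Xs. xs ! i \<in> simp (Xs ! i) m)}"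

text \<open>Generating relation: (f; u_1.x_1,...,u_n.x_n) ~ (f o (u_1 + ... + u_n); x_1,...,x_n).\<close>
definition qgen :: "'a emsset list \<Rightarrow> nat \<Rightarrow>
    ((nat \<Rightarrow> nat) list list \<times> 'a list) \<Rightarrow> ((nat \<Rightarrow> nat) list list \<times> 'a list) \<Rightarrow> bool" where
  "qgen Xs m p q \<longleftrightarrow> (\<exists>fs xs us. (fs, xs) \<in> qcar Xs m \<and> length us = length Xs \<and>
      (\<forall>u\<in>set us. em_elem m u) \<and>
      p = (fs, map (\<lambda>i. sact (Xs ! i) m (us ! i) (xs ! i)) [0..<length Xs]) \<and>
      q = (map (\<lambda>k. map (\<lambda>j. (fs ! k ! j) \<circ> (us ! j ! k)) [0..<length Xs]) [0..<Suc m], xs))"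

definition qrel :: "'a emsset list \<Rightarrow> nat \<Rightarrow>
    ((nat \<Rightarrow> nat) list list \<times> 'a list) \<Rightarrow> ((nat \<Rightarrow> nat) list list \<times> 'a list) \<Rightarrow> bool" where
  "qrel Xs m = equivclp (qgen Xs m)"

definition Phi :: "'a emsset list \<Rightarrow> nat \<Rightarrow> ((nat \<Rightarrow> nat) list list \<times> 'a list) \<Rightarrow> 'a list" where
  "Phi Xs m p = map (\<lambda>j. sact (Xs ! j) m (map (\<lambda>k. fst p ! k ! j) [0..<Suc m]) (snd p ! j))
      [0..<length Xs]"

definition qsmap :: "'a emsset list \<Rightarrow> nat \<Rightarrow> nat list \<Rightarrow>
    ((nat \<Rightarrow> nat) list list \<times> 'a list) \<Rightarrow> ((nat \<Rightarrow> nat) list list \<times> 'a list)" where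
  "qsmap Xs m \<alpha> p = (map (\<lambda>i. fst p ! i) \<alpha>,
      map (\<lambda>j. smap (Xs ! j) m \<alpha> (snd p ! j)) [0..<length Xs])"

definition qact :: "nat \<Rightarrow> (nat \<Rightarrow> nat) list \<Rightarrow>
    ((nat \<Rightarrow> nat) list list \<times> 'a list) \<Rightarrow> ((nat \<Rightarrow> nat) list list \<times> 'a list)" where
  "qact m v p = (map2 (\<lambda>vk f. map (\<lambda>g. vk \<circ> g) f) v (fst p), snd p)"

end

(*
  If B_i are co-infinite k-supports of x_i, then the i-th component of Phi [f; x] is
  k-supported on f_k(iota_i(B_i)); these sets are pairwise disjoint and have co-infinite union
  because f_k is injective. Conversely, a tuple y with disjoint supports A_i is Phi [e; y] for
  any e whose i-th components are the identity on A_i.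

  Injectivity rests on one move: [e; y] = [e'; y] whenever e and e' agree on co-infinite
  supports S of y. If e' = e o w with w fixing S, this is a single generating relation, since
  w.y = y. In general, e and e' are both related to a common injection that agrees with them on
  S and maps the complement of S onto disjoint infinite pieces of the ranges of e and e'.
  For a single factor, the move shows that a.x depends only on the restriction of a to
  supports of x, which makes the supports of a simplex of a mild X closed under intersection.
  Every class [f; x] then contains [e; Phi [f; x]] with e the identity on the transported
  supports, and two such representatives of the same tuple agree on the intersections of their
  supports.
*)

theory Submission
  imports Defs "HOL-Library.Infinite_Set" "HOL-Library.Nat_Bijection" "HOL-Library.Disjoint_Sets"
begin

declare upt_Suc[simp del]

section \<open>Injections and infinite sets of natural numbers\<close>

lemma inj_piecewise:
  assumes "inj_on f A" and "inj_on g (- A)" and "f ` A \<inter> g ` (- A) = {}"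
  shows "inj (\<lambda>t. if t \<in> A then f t else g t)"
proof (rule injI)
  fix s t assume eq: "(if s \<in> A then f s else g s) = (if t \<in> A then f t else g t)"
  have "f a \<noteq> g b \<and> g b \<noteq> f a" if "a \<in> A" "b \<notin> A" for a b
    using assms(3) that by blast
  then show "s = t"
    using eq assms(1,2) by (cases "s \<in> A"; cases "t \<in> A") (auto simp: inj_on_def)
qed

lemma infinite_image_inj: "inj f \<Longrightarrow> infinite A \<Longrightarrow> infinite (f ` A)"
  by (meson finite_imageD inj_on_subset subset_UNIV)

lemma bij_betw_enumerate_inv_into:
  fixes A B :: "nat set"
  shows "infinite A \<Longrightarrow> infinite B \<Longrightarrow> bij_betw (enumerate B \<circ> inv_into UNIV (enumerate A)) A B"
  by (meson bij_betw_inv_into bij_betw_trans bij_enumerate)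

(* The t-th value lies in P (t mod N) and exceeds all earlier values, so the residue classes
   modulo N yield pairwise disjoint infinite subsets. *)
primrec round_robin :: "(nat \<Rightarrow> nat set) \<Rightarrow> nat \<Rightarrow> nat \<Rightarrow> nat" where
  "round_robin P N 0 = (LEAST x. x \<in> P 0)"
| "round_robin P N (Suc t) = (LEAST x. x \<in> P (Suc t mod N) \<and> round_robin P N t < x)"

lemma round_robin_mem_strict_mono:
  assumes inf: "\<And>l. l < N \<Longrightarrow> infinite (P l)" and N: "0 < N"
  shows "round_robin P N t \<in> P (t mod N)" and "strict_mono (round_robin P N)"
proof -
  have above: "\<exists>x. x \<in> P (t mod N) \<and> b < x" for t b
    using inf[of "t mod N"] N by (meson infinite_nat_iff_unbounded mod_less_divisor)
  show "round_robin P N t \<in> P (t mod N)"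
  proof (cases t)
    case 0
    then show ?thesis using LeastI_ex[of "\<lambda>x. x \<in> P 0"] above[of 0 0] by auto
  next
    case (Suc t')
    then show ?thesis using LeastI_ex[OF above[of t "round_robin P N t'"]] by simp
  qed
  show "strict_mono (round_robin P N)"
    using LeastI_ex[OF above[of "Suc _" "round_robin P N _"]] by (auto simp: strict_mono_Suc_iff)
qed

lemma disjoint_infinite_subsets:
  fixes P :: "nat \<Rightarrow> nat set"
  assumes inf: "\<And>l. l < N \<Longrightarrow> infinite (P l)"
  shows "\<exists>Q. (\<forall>l<N. Q l \<subseteq> P l \<and> infinite (Q l)) \<and> disjoint_family_on Q {..<N}"
proof (cases "N = 0")
  case False
  let ?r = "round_robin P N"
  define Q where "Q l = ?r ` {t. t mod N = l}" for l
  have inj: "inj ?r"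
    using round_robin_mem_strict_mono(2)[OF inf] False by (simp add: strict_mono_imp_inj_on)
  have "infinite (Q l)" if "l < N" for l
  proof -
    have "inj (\<lambda>t. l + N * t)" using False by (auto intro: injI)
    then have "infinite (range (\<lambda>t. l + N * t))" by (simp add: infinite_image_inj)
    moreover have "range (\<lambda>t. l + N * t) \<subseteq> {t. t mod N = l}" using that by auto
    ultimately show ?thesis
      unfolding Q_def using inj by (simp add: infinite_image_inj infinite_super)
  qed
  moreover have "Q l \<subseteq> P l" for l
    unfolding Q_def using round_robin_mem_strict_mono(1)[OF inf] False by auto
  moreover have "disjoint_family_on Q {..<N}"
    unfolding disjoint_family_on_def Q_def using inj by (auto dest: injD)
  ultimately show ?thesis by blast
qed (simp add: disjoint_family_on_def)

lemma disjoint_infinite_subset_pairs: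
  fixes P P' :: "nat \<Rightarrow> nat \<Rightarrow> nat set"
  assumes inf: "\<And>k i. k \<le> m \<Longrightarrow> i < n \<Longrightarrow> infinite (P k i) \<and> infinite (P' k i)"
  obtains E E' where
    "\<And>k i. k \<le> m \<Longrightarrow> i < n \<Longrightarrow> E k i \<subseteq> P k i \<and> infinite (E k i) \<and> E' k i \<subseteq> P' k i \<and> infinite (E' k i)"
    and "\<And>k. k \<le> m \<Longrightarrow> disjoint_family_on (\<lambda>i. E k i \<union> E' k i) {..<n}"
proof -
  define R where "R k l = (if l < n then P k l else P' k (l - n))" for k l
  define Q where
    "Q k = (SOME Q. (\<forall>l<2 * n. Q l \<subseteq> R k l \<and> infinite (Q l)) \<and> disjoint_family_on Q {..<2 * n})" for k
  have Q: "(\<forall>l<2 * n. Q k l \<subseteq> R k l \<and> infinite (Q k l)) \<and> disjoint_family_on (Q k) {..<2 * n}"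
    if k: "k \<le> m" for k
  proof -
    have "infinite (R k l)" if "l < 2 * n" for l
      using inf[OF k, of l] inf[OF k, of "l - n"] that by (simp add: R_def)
    then show ?thesis
      unfolding Q_def by (rule someI_ex[OF disjoint_infinite_subsets])
  qed
  show thesis
  proof (rule that[of "\<lambda>k i. Q k i" "\<lambda>k i. Q k (n + i)"])
    show "Q k i \<subseteq> P k i \<and> infinite (Q k i) \<and> Q k (n + i) \<subseteq> P' k i \<and> infinite (Q k (n + i))"
      if "k \<le> m" "i < n" for k i
      using conjunct1[OF Q[OF that(1)], rule_format, of i]
        conjunct1[OF Q[OF that(1)], rule_format, of "n + i"]
        that(2) by (simp add: R_def)
    show "disjoint_family_on (\<lambda>i. Q k i \<union> Q k (n + i)) {..<n}" if k: "k \<le> m" for k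
      unfolding disjoint_family_on_def
    proof (intro ballI impI)
      have Q_disj: "Q k a \<inter> Q k b = {}" if "a < 2 * n" "b < 2 * n" "a \<noteq> b" for a b
        using disjoint_family_onD[OF conjunct2[OF Q[OF k]]] that by simp
      fix i j assume "i \<in> {..<n}" "j \<in> {..<n}" "i \<noteq> j"
      then show "(Q k i \<union> Q k (n + i)) \<inter> (Q k j \<union> Q k (n + j)) = {}"
        using Q_disj[of i j] Q_disj[of i "n + j"] Q_disj[of "n + i" j] Q_disj[of "n + i" "n + j"]
        by (auto simp: Int_Un_distrib Int_Un_distrib2)
    qed
  qed
qed

lemma infinite_subset_with_infinite_remainder:
  fixes Y W :: "nat set"
  assumes "infinite Y" and "infinite W"
  obtains Z where "Z \<subseteq> Y" and "infinite Z" and "infinite (W - Z)"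
proof -
  have "infinite (if l = 0 then Y else W)" for l :: nat
    using assms by simp
  then obtain Q where Q: "\<forall>l<2. Q l \<subseteq> (if l = 0 then Y else W) \<and> infinite (Q l)"
    and disj: "disjoint_family_on Q {..<2::nat}"
    using disjoint_infinite_subsets[of 2 "\<lambda>l. if l = 0 then Y else W"] by blast
  have "Q 1 \<subseteq> W - Q 0"
    using Q[rule_format, of 1] disjoint_family_onD[OF disj, of 0 1] by auto
  then show ?thesis
    using that[of "Q 0"] Q[rule_format, of 0] Q[rule_format, of 1] finite_subset by auto
qed

section \<open>Injections $n \times \omega \to \omega$\<close>

lemma einj_length: "einj n f \<Longrightarrow> length f = n"
  unfolding einj_def by simp

lemma einj_eqD: "einj n f \<Longrightarrow> i < n \<Longrightarrow> j < n \<Longrightarrow> (f ! i) s = (f ! j) t \<Longrightarrow> i = j \<and> s = t"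
  unfolding einj_def using inj_onD[of "\<lambda>(j, t). (f ! j) t" "{..<n} \<times> UNIV" "(i, s)" "(j, t)"] by auto

lemma einj_inj_nth: "einj n f \<Longrightarrow> i < n \<Longrightarrow> inj (f ! i)"
  by (meson einj_eqD injI)

lemma einjI:
  assumes "length f = n" and "\<And>i j s t. i < n \<Longrightarrow> j < n \<Longrightarrow> (f ! i) s = (f ! j) t \<Longrightarrow> i = j \<and> s = t"
  shows "einj n f"
  unfolding einj_def using assms by (auto intro!: inj_onI)

lemma einj_images_disjoint:
  assumes "einj n f" and "i < n" and "j < n" and "i = j \<Longrightarrow> A \<inter> B = {}"
  shows "(f ! i) ` A \<inter> (f ! j) ` B = {}"
proof (rule equals0I)
  fix x assume "x \<in> (f ! i) ` A \<inter> (f ! j) ` B"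
  then obtain a b where "a \<in> A" "b \<in> B" "(f ! i) a = (f ! j) b" by blast
  then show False using einj_eqD[OF assms(1-3)] assms(4) by blast
qed

lemma compl_images_disjoint_image:
  assumes e: "einj n e" and e': "einj n e'" and ij: "i < n" "j < n"
    and agree: "\<And>s. s \<in> S j \<Longrightarrow> (e ! j) s = (e' ! j) s"
  shows "((e ! i) ` (- S i) \<union> (e' ! i) ` (- S i)) \<inter> (e ! j) ` S j = {}"
proof -
  have "(e' ! j) ` S j = (e ! j) ` S j"
    using agree by (auto simp: image_iff)
  then show ?thesis
    using einj_images_disjoint[OF e ij, of "- S i" "S j"]
      einj_images_disjoint[OF e' ij, of "- S i" "S j"]
    by auto
qed

lemma einj_piecewise:
  assumes "\<And>i j s t. i < n \<Longrightarrow> j < n \<Longrightarrow> s \<in> S i \<Longrightarrow> t \<in> S j \<Longrightarrow> f i s = f j t \<Longrightarrow> i = j \<and> s = t"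
    and "\<And>i j s t. i < n \<Longrightarrow> j < n \<Longrightarrow> s \<notin> S i \<Longrightarrow> t \<notin> S j \<Longrightarrow> g i s = g j t \<Longrightarrow> i = j \<and> s = t"
    and "\<And>i j s t. i < n \<Longrightarrow> j < n \<Longrightarrow> s \<in> S i \<Longrightarrow> t \<notin> S j \<Longrightarrow> f i s \<noteq> g j t"
  shows "einj n (map (\<lambda>i s. if s \<in> S i then f i s else g i s) [0..<n])"
proof (rule einjI)
  fix i j s t assume "i < n" "j < n"
    and "(map (\<lambda>i s. if s \<in> S i then f i s else g i s) [0..<n] ! i) s =
         (map (\<lambda>i s. if s \<in> S i then f i s else g i s) [0..<n] ! j) t"
  then show "i = j \<and> s = t"
    using assms(1,2) assms(3)[of i j s t] assms(3)[of j i t s]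
    by (cases "s \<in> S i"; cases "t \<in> S j") auto
qed simp

lemma einj_comp:
  assumes "einj n e" and "\<And>j. j < n \<Longrightarrow> inj (g j)"
  shows "einj n (map (\<lambda>j. (e ! j) \<circ> g j) [0..<n])"
proof (rule einjI)
  fix i j s t assume ij: "i < n" "j < n"
    and "(map (\<lambda>j. (e ! j) \<circ> g j) [0..<n] ! i) s = (map (\<lambda>j. (e ! j) \<circ> g j) [0..<n] ! j) t"
  then have "(e ! i) (g i s) = (e ! j) (g j t)" by simp
  then have "i = j \<and> g i s = g j t" using einj_eqD[OF assms(1) ij] by blast
  then show "i = j \<and> s = t" using assms(2)[OF ij(1)] by (auto dest: injD)
qed simp

definition patch :: "(nat \<Rightarrow> nat) list \<Rightarrow> (nat \<Rightarrow> nat set) \<Rightarrow> (nat \<Rightarrow> nat set) \<Rightarrow> (nat \<Rightarrow> nat) list" where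
  "patch f S T = map (\<lambda>i s. if s \<in> S i then (f ! i) s
      else enumerate (T i) (inv_into UNIV (enumerate (- S i)) s)) [0..<length f]"

lemma patch_nth_agree: "i < length f \<Longrightarrow> s \<in> S i \<Longrightarrow> (patch f S T ! i) s = (f ! i) s"
  unfolding patch_def by simp

lemma patch_cong:
  assumes "length f = length f'" and "\<And>i s. i < length f \<Longrightarrow> s \<in> S i \<Longrightarrow> (f ! i) s = (f' ! i) s"
  shows "patch f S T = patch f' S T"
  using assms unfolding patch_def by (auto simp: fun_eq_iff)

lemma range_patch_nth:
  assumes "i < length f" and "infinite (- S i)" and "infinite (T i)"
  shows "range (patch f S T ! i) = (f ! i) ` S i \<union> T i"
proof -
  let ?g = "enumerate (T i) \<circ> inv_into UNIV (enumerate (- S i))"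
  have "(patch f S T ! i) s = (if s \<in> S i then (f ! i) s else ?g s)" for s
    using assms(1) by (simp add: patch_def)
  then have "range (patch f S T ! i) = (f ! i) ` S i \<union> ?g ` (- S i)"
    by (auto simp: image_iff)
  also have "?g ` (- S i) = T i"
    using bij_betw_enumerate_inv_into[OF assms(2,3)] by (simp add: bij_betw_def)
  finally show ?thesis .
qed

lemma einj_patch:
  assumes f: "einj n f"
    and inf: "\<And>i. i < n \<Longrightarrow> infinite (- S i) \<and> infinite (T i)"
    and disj: "disjoint_family_on T {..<n}"
    and sep: "\<And>i j. i < n \<Longrightarrow> j < n \<Longrightarrow> T i \<inter> (f ! j) ` S j = {}"
  shows "einj n (patch f S T)"
proof -
  define g where "g i = enumerate (T i) \<circ> inv_into UNIV (enumerate (- S i))" for i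
  have bij: "bij_betw (g i) (- S i) (T i)" if "i < n" for i
    using inf[OF that] by (simp add: g_def bij_betw_enumerate_inv_into)
  have gT: "g i s \<in> T i" if "i < n" "s \<notin> S i" for i s
    using bij_betw_apply[OF bij[OF that(1)]] that(2) by simp
  have "einj n (map (\<lambda>i s. if s \<in> S i then (f ! i) s else g i s) [0..<n])"
  proof (rule einj_piecewise)
    fix i j s t assume "i < n" "j < n" "s \<in> S i" "t \<in> S j" "(f ! i) s = (f ! j) t"
    then show "i = j \<and> s = t" using einj_eqD[OF f] by blast
  next
    fix i j s t assume ij: "i < n" "j < n" and st: "s \<notin> S i" "t \<notin> S j" and eq: "g i s = g j t"
    have "i = j"
      using gT[OF ij(1) st(1)] gT[OF ij(2) st(2)] disj ij eq by (auto simp: disjoint_family_on_def)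
    then show "i = j \<and> s = t"
      using bij[OF ij(1)] eq st by (auto simp: bij_betw_def dest: inj_onD)
  next
    fix i j s t assume ij: "i < n" "j < n" and "s \<in> S i" "t \<notin> S j"
    then have "g j t \<in> T j" "(f ! i) s \<in> (f ! i) ` S i"
      using gT[OF ij(2)] by auto
    then show "(f ! i) s \<noteq> g j t"
      using sep[OF ij(2,1)] by auto
  qed
  then show ?thesis
    unfolding patch_def g_def comp_def using einj_length[OF f] by simp
qed

definition einj_id_on :: "nat \<Rightarrow> (nat \<Rightarrow> nat set) \<Rightarrow> (nat \<Rightarrow> nat) list" where
  "einj_id_on n D = map (\<lambda>i s. if s \<in> D i then s
      else enumerate (- (\<Union>j<n. D j)) (prod_encode (i, s))) [0..<n]"

lemma einj_id_on_apply: "i < n \<Longrightarrow> s \<in> D i \<Longrightarrow> (einj_id_on n D ! i) s = s"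
  unfolding einj_id_on_def by simp

lemma einj_einj_id_on:
  assumes disj: "disjoint_family_on D {..<n}" and inf: "infinite (- (\<Union>j<n. D j))"
  shows "einj n (einj_id_on n D)"
  unfolding einj_id_on_def
proof (rule einj_piecewise)
  fix i j s t assume "i < n" "j < n" "s \<in> D i" "t \<in> D j" "s = t"
  then show "i = j \<and> s = t" using disj by (auto simp: disjoint_family_on_def)
next
  fix i j s t
  assume "enumerate (- (\<Union>j<n. D j)) (prod_encode (i, s)) =
    enumerate (- (\<Union>j<n. D j)) (prod_encode (j, t))"
  then have "prod_encode (i, s) = prod_encode (j, t)"
    by (rule injD[OF inj_enumerate[OF inf]])
  then show "i = j \<and> s = t" by (simp add: prod_encode_eq)
next
  fix i j s t assume "i < n" "s \<in> D i"
  then have "s \<in> (\<Union>j<n. D j)" by blast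
  then show "s \<noteq> enumerate (- (\<Union>j<n. D j)) (prod_encode (j, t))"
    using enumerate_in_set[OF inf] by auto
qed

section \<open>$E\mathcal M$-simplicial sets\<close>

lemma em_sset_act_closed:
  "em_sset X \<Longrightarrow> em_elem m u \<Longrightarrow> x \<in> simp X m \<Longrightarrow> sact X m u x \<in> simp X m"
  unfolding em_sset_def by blast

lemma em_sset_act_id: "em_sset X \<Longrightarrow> x \<in> simp X m \<Longrightarrow> sact X m (replicate (Suc m) id) x = x"
  unfolding em_sset_def by blast

lemma em_sset_act_comp:
  "em_sset X \<Longrightarrow> em_elem m u \<Longrightarrow> em_elem m v \<Longrightarrow> x \<in> simp X m \<Longrightarrow>
    sact X m u (sact X m v x) = sact X m (map2 (\<circ>) u v) x"
  unfolding em_sset_def by blast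

lemma em_sset_smap_act:
  "em_sset X \<Longrightarrow> simp_op n \<alpha> \<Longrightarrow> em_elem n u \<Longrightarrow> x \<in> simp X n \<Longrightarrow>
    smap X n \<alpha> (sact X n u x) = sact X (length \<alpha> - 1) (map (\<lambda>i. u ! i) \<alpha>) (smap X n \<alpha> x)"
  unfolding em_sset_def by blast

lemma em_elem_length: "em_elem m u \<Longrightarrow> length u = Suc m"
  unfolding em_elem_def by blast

lemma em_elem_inj_nth: "em_elem m u \<Longrightarrow> k \<le> m \<Longrightarrow> inj (u ! k)"
  unfolding em_elem_def by (metis le_imp_less_Suc nth_mem)

lemma em_elem_map_iff: "em_elem m (map F [0..<Suc m]) \<longleftrightarrow> (\<forall>k\<le>m. inj (F k))"
  unfolding em_elem_def by (auto simp: less_Suc_eq_le)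

lemma incl_k_length [simp]: "length (incl_k m k u) = Suc m"
  unfolding incl_k_def by (simp del: replicate_Suc)

lemma incl_k_nth: "j \<le> m \<Longrightarrow> incl_k m k u ! j = (if j = k then u else id)"
  unfolding incl_k_def by (simp del: replicate_Suc add: nth_list_update)

lemma incl_k_id: "incl_k m k id = replicate (Suc m) id"
  by (intro nth_equalityI) (simp_all add: incl_k_nth less_Suc_eq_le del: replicate_Suc)

lemma em_elem_incl_k: "inj u \<Longrightarrow> em_elem m (incl_k m k u)"
  unfolding em_elem_def by (auto simp: in_set_conv_nth incl_k_nth less_Suc_eq_le)

lemma sact_eq_self_if_fixes_supports:
  assumes X: "em_sset X" and x: "x \<in> simp X m" and w: "em_elem m w"
    and supp: "\<And>k. k \<le> m \<Longrightarrow> ksupp X m k (S k) x"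
    and w_fix: "\<And>k s. k \<le> m \<Longrightarrow> s \<in> S k \<Longrightarrow> (w ! k) s = s"
  shows "sact X m w x = x"
proof -
  \<comment> \<open>w is the product of the incl_k m k (w ! k), each of which fixes x.\<close>
  define w' where "w' r = map (\<lambda>k. if k < r then w ! k else id) [0..<Suc m]" for r
  have w'_em: "em_elem m (w' r)" for r
    unfolding w'_def em_elem_map_iff using em_elem_inj_nth[OF w] by auto
  have "sact X m (w' r) x = x" if "r \<le> Suc m" for r
    using that
  proof (induction r)
    case 0
    have "w' 0 = replicate (Suc m) id"
      unfolding w'_def by (intro nth_equalityI) (auto simp del: replicate_Suc)
    then show ?case using em_sset_act_id[OF X x] by simp
  next
    case (Suc r)
    then have r: "r \<le> m" by simp
    have "w' (Suc r) = map2 (\<circ>) (incl_k m r (w ! r)) (w' r)"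
      by (intro nth_equalityI) (auto simp: w'_def incl_k_nth less_Suc_eq)
    then have "sact X m (w' (Suc r)) x = sact X m (incl_k m r (w ! r)) (sact X m (w' r) x)"
      using em_sset_act_comp[OF X em_elem_incl_k[OF em_elem_inj_nth[OF w r]] w'_em x] by simp
    also have "\<dots> = x"
      using Suc supp[OF r] w_fix[OF r] em_elem_inj_nth[OF w r] unfolding ksupp_def by auto
    finally show ?case .
  qed
  moreover have "w' (Suc m) = w"
    unfolding w'_def using em_elem_length[OF w] by (intro nth_equalityI) auto
  ultimately show ?thesis by force
qed

section \<open>$\Phi$ is a well-defined map of $E\mathcal M$-simplicial sets\<close>

lemma qcar_iff:
  "(fs, xs) \<in> qcar Xs m \<longleftrightarrow> length fs = Suc m \<and> (\<forall>k\<le>m. einj (length Xs) (fs ! k)) \<and>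
     length xs = length Xs \<and> (\<forall>i<length Xs. xs ! i \<in> simp (Xs ! i) m)"
  unfolding qcar_def by (auto simp: all_set_conv_all_nth less_Suc_eq_le)

lemma qcar_em_elem_column:
  "(f, x) \<in> qcar Xs m \<Longrightarrow> i < length Xs \<Longrightarrow> em_elem m (map (\<lambda>k. f ! k ! i) [0..<Suc m])"
  unfolding qcar_iff em_elem_map_iff using einj_inj_nth by blast

lemma qcar_nth_in_simp: "(f, x) \<in> qcar Xs m \<Longrightarrow> i < length Xs \<Longrightarrow> x ! i \<in> simp (Xs ! i) m"
  unfolding qcar_iff by blast

lemma Phi_length [simp]: "length (Phi Xs m p) = length Xs"
  unfolding Phi_def by simp

lemma Phi_nth:
  "i < length Xs \<Longrightarrow> Phi Xs m (f, x) ! i = sact (Xs ! i) m (map (\<lambda>k. f ! k ! i) [0..<Suc m]) (x ! i)"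
  unfolding Phi_def by simp

lemma Phi_nth_in_simp:
  assumes "\<forall>X\<in>set Xs. em_sset X" and "(f, x) \<in> qcar Xs m" and "i < length Xs"
  shows "Phi Xs m (f, x) ! i \<in> simp (Xs ! i) m"
proof -
  have "em_sset (Xs ! i)" "x ! i \<in> simp (Xs ! i) m"
    using assms by (auto simp: qcar_iff)
  then show ?thesis
    by (simp add: Phi_nth assms(3) em_sset_act_closed[OF _ qcar_em_elem_column[OF assms(2,3)]])
qed

lemma Phi_eq_if_qgen:
  assumes ES: "\<forall>X\<in>set Xs. em_sset X" and g: "qgen Xs m p q"
  shows "Phi Xs m p = Phi Xs m q"
proof -
  obtain fs xs us where c: "(fs, xs) \<in> qcar Xs m" and lu: "length us = length Xs"
    and ue: "\<forall>u\<in>set us. em_elem m u"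
    and p: "p = (fs, map (\<lambda>i. sact (Xs ! i) m (us ! i) (xs ! i)) [0..<length Xs])"
    and q: "q = (map (\<lambda>k. map (\<lambda>j. (fs ! k ! j) \<circ> (us ! j ! k)) [0..<length Xs]) [0..<Suc m], xs)"
    using g unfolding qgen_def by blast
  show ?thesis
  proof (rule nth_equalityI)
    fix j assume "j < length (Phi Xs m p)"
    then have j: "j < length Xs" by simp
    let ?f = "map (\<lambda>k. fs ! k ! j) [0..<Suc m]"
    have uj: "em_elem m (us ! j)" using ue lu j by simp
    have "Phi Xs m p ! j = sact (Xs ! j) m ?f (sact (Xs ! j) m (us ! j) (xs ! j))"
      using j by (simp add: p Phi_nth)
    also have "\<dots> = sact (Xs ! j) m (map2 (\<circ>) ?f (us ! j)) (xs ! j)"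
      using ES j
      by (simp add: em_sset_act_comp[OF _ qcar_em_elem_column[OF c j] uj qcar_nth_in_simp[OF c j]])
    also have "map2 (\<circ>) ?f (us ! j) = map (\<lambda>k. fst q ! k ! j) [0..<Suc m]"
      using c j em_elem_length[OF uj] by (intro nth_equalityI) (auto simp: q qcar_iff einj_length)
    finally show "Phi Xs m p ! j = Phi Xs m q ! j"
      using j by (simp add: q Phi_def)
  qed simp
qed

lemma Phi_eq_if_qrel:
  assumes "\<forall>X\<in>set Xs. em_sset X" and "qrel Xs m p q"
  shows "Phi Xs m p = Phi Xs m q"
  using assms(2) unfolding qrel_def
  by (induction rule: equivclp_induct) (auto simp: symclp_def Phi_eq_if_qgen[OF assms(1)])

lemma Phi_qsmap:
  assumes ES: "\<forall>X\<in>set Xs. em_sset X" and a: "simp_op m \<alpha>" and p: "p \<in> qcar Xs m"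
  shows "Phi Xs (length \<alpha> - 1) (qsmap Xs m \<alpha> p) =
    map (\<lambda>j. smap (Xs ! j) m \<alpha> (Phi Xs m p ! j)) [0..<length Xs]"
proof (rule nth_equalityI)
  obtain fs xs where pe: "p = (fs, xs)" by fastforce
  have "\<alpha> \<noteq> []" and am: "\<forall>i\<in>set \<alpha>. i \<le> m" using a unfolding simp_op_def by auto
  fix j assume "j < length (Phi Xs (length \<alpha> - 1) (qsmap Xs m \<alpha> p))"
  then have j: "j < length Xs" by simp
  let ?u = "map (\<lambda>k. fs ! k ! j) [0..<Suc m]"
  have "map (\<lambda>k. map (\<lambda>i. fs ! i) \<alpha> ! k ! j) [0..<Suc (length \<alpha> - 1)] = map (\<lambda>i. ?u ! i) \<alpha>"
    using \<open>\<alpha> \<noteq> []\<close> am by (intro nth_equalityI) (auto simp: less_Suc_eq_le)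
  moreover have "smap (Xs ! j) m \<alpha> (Phi Xs m p ! j) =
      sact (Xs ! j) (length \<alpha> - 1) (map (\<lambda>i. ?u ! i) \<alpha>) (smap (Xs ! j) m \<alpha> (xs ! j))"
    using ES j p
    by (simp add: pe Phi_nth em_sset_smap_act[OF _ a qcar_em_elem_column qcar_nth_in_simp])
  ultimately show "Phi Xs (length \<alpha> - 1) (qsmap Xs m \<alpha> p) ! j =
      map (\<lambda>j. smap (Xs ! j) m \<alpha> (Phi Xs m p ! j)) [0..<length Xs] ! j"
    using j by (simp add: Phi_def qsmap_def pe)
qed simp

lemma Phi_qact:
  assumes ES: "\<forall>X\<in>set Xs. em_sset X" and v: "em_elem m v" and p: "p \<in> qcar Xs m"
  shows "Phi Xs m (qact m v p) = map (\<lambda>j. sact (Xs ! j) m v (Phi Xs m p ! j)) [0..<length Xs]"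
proof (rule nth_equalityI)
  obtain fs xs where pe: "p = (fs, xs)" by fastforce
  fix j assume "j < length (Phi Xs m (qact m v p))"
  then have j: "j < length Xs" by simp
  let ?u = "map (\<lambda>k. fs ! k ! j) [0..<Suc m]"
  have "map (\<lambda>k. fst (qact m v p) ! k ! j) [0..<Suc m] = map2 (\<circ>) v ?u"
    using p j em_elem_length[OF v]
    by (intro nth_equalityI) (auto simp: qact_def pe qcar_iff einj_length less_Suc_eq_le)
  moreover have "sact (Xs ! j) m v (Phi Xs m p ! j) = sact (Xs ! j) m (map2 (\<circ>) v ?u) (xs ! j)"
    using ES j p
    by (simp add: pe Phi_nth em_sset_act_comp[OF _ v qcar_em_elem_column qcar_nth_in_simp])
  ultimately show "Phi Xs m (qact m v p) ! j =
      map (\<lambda>j. sact (Xs ! j) m v (Phi Xs m p ! j)) [0..<length Xs] ! j"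
    using j by (simp add: Phi_def qact_def pe)
qed simp

section \<open>Changing representatives\<close>

lemma qrel_trans: "qrel Xs m a b \<Longrightarrow> qrel Xs m b c \<Longrightarrow> qrel Xs m a c"
  unfolding qrel_def by (rule equivclp_trans)

lemma qrel_sym: "qrel Xs m a b \<Longrightarrow> qrel Xs m b a"
  unfolding qrel_def by (rule equivclp_sym)

lemma qrel_if_qgen: "qgen Xs m a b \<Longrightarrow> qrel Xs m a b"
  unfolding qrel_def by (rule r_into_equivclp)

lemma qgen_if_range_subset:
  assumes ES: "\<forall>X\<in>set Xs. em_sset X" and e: "(e, y) \<in> qcar Xs m" and z: "(z, y) \<in> qcar Xs m"
    and supp: "\<And>k i. k \<le> m \<Longrightarrow> i < length Xs \<Longrightarrow> ksupp (Xs ! i) m k (S k i) (y ! i)"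
    and agree: "\<And>k i s. k \<le> m \<Longrightarrow> i < length Xs \<Longrightarrow> s \<in> S k i \<Longrightarrow> (z ! k ! i) s = (e ! k ! i) s"
    and range: "\<And>k i. k \<le> m \<Longrightarrow> i < length Xs \<Longrightarrow> range (z ! k ! i) \<subseteq> range (e ! k ! i)"
  shows "qgen Xs m (e, y) (z, y)"
proof -
  let ?n = "length Xs"
  \<comment> \<open>z = e o w, and w.y = y because w fixes the supports S.\<close>
  define w where "w k i = inv (e ! k ! i) \<circ> (z ! k ! i)" for k i
  define us where "us = map (\<lambda>i. map (\<lambda>k. w k i) [0..<Suc m]) [0..<?n]"
  have e_inj: "inj (e ! k ! i)" and z_inj: "inj (z ! k ! i)" if "k \<le> m" "i < ?n" for k i
    using e z that by (auto simp: qcar_iff einj_inj_nth)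
  have e_w: "(e ! k ! i) \<circ> w k i = z ! k ! i" if "k \<le> m" "i < ?n" for k i
    using range[OF that] by (simp add: w_def fun_eq_iff) (meson f_inv_into_f rangeI subsetD)
  have "inj (w k i)" if "k \<le> m" "i < ?n" for k i
    using z_inj[OF that] e_w[OF that] by (metis inj_on_imageI2)
  then have us_em: "\<forall>u\<in>set us. em_elem m u"
    unfolding us_def by (auto simp: em_elem_map_iff)
  have "sact (Xs ! i) m (us ! i) (y ! i) = y ! i" if i: "i < ?n" for i
  proof (rule sact_eq_self_if_fixes_supports)
    show "em_sset (Xs ! i)" "y ! i \<in> simp (Xs ! i) m" "em_elem m (us ! i)"
      using ES us_em e i by (auto simp: qcar_nth_in_simp us_def)
    show "ksupp (Xs ! i) m k (S k i) (y ! i)" if "k \<le> m" for k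
      using supp that i by blast
    show "(us ! i ! k) s = s" if "k \<le> m" "s \<in> S k i" for k s
      using that i agree[OF that(1) i that(2)] e_inj[OF that(1) i]
      by (simp add: us_def w_def less_Suc_eq_le)
  qed
  then have "map (\<lambda>i. sact (Xs ! i) m (us ! i) (y ! i)) [0..<?n] = y"
    using e by (intro nth_equalityI) (auto simp: qcar_iff)
  moreover have "map (\<lambda>k. map (\<lambda>j. (e ! k ! j) \<circ> (us ! j ! k)) [0..<?n]) [0..<Suc m] = z"
    using z e_w by (intro nth_equalityI) (auto simp: qcar_iff us_def less_Suc_eq_le einj_length)
  ultimately show ?thesis
    unfolding qgen_def using e us_em
    by (intro exI[of _ e] exI[of _ y] exI[of _ us]) (auto simp: us_def)
qed

lemma qgen_comp_Phi:
  assumes e: "(e, x) \<in> qcar Xs m" and f: "(f, x) \<in> qcar Xs m"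
  shows "qgen Xs m (e, Phi Xs m (f, x))
    (map (\<lambda>k. map (\<lambda>j. (e ! k ! j) \<circ> (f ! k ! j)) [0..<length Xs]) [0..<Suc m], x)"
proof -
  define us where "us = map (\<lambda>i. map (\<lambda>k. f ! k ! i) [0..<Suc m]) [0..<length Xs]"
  show ?thesis
    unfolding qgen_def using e qcar_em_elem_column[OF f]
    by (intro exI[of _ e] exI[of _ x] exI[of _ us]) (auto simp: us_def Phi_def)
qed

lemma qcar_patch:
  assumes e: "(e, y) \<in> qcar Xs m"
    and inf: "\<And>k i. k \<le> m \<Longrightarrow> i < length Xs \<Longrightarrow> infinite (- S k i) \<and> infinite (T k i)"
    and disj: "\<And>k. k \<le> m \<Longrightarrow> disjoint_family_on (T k) {..<length Xs}"
    and sep: "\<And>k i j. k \<le> m \<Longrightarrow> i < length Xs \<Longrightarrow> j < length Xs \<Longrightarrow> T k i \<inter> (e ! k ! j) ` S k j = {}"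
  shows "(map (\<lambda>k. patch (e ! k) (S k) (T k)) [0..<Suc m], y) \<in> qcar Xs m"
proof -
  have "einj (length Xs) (patch (e ! k) (S k) (T k))" if k: "k \<le> m" for k
    using e inf disj sep k by (intro einj_patch) (auto simp: qcar_iff)
  then show ?thesis
    using e by (simp add: qcar_iff less_Suc_eq_le)
qed

lemma qrel_patch:
  assumes ES: "\<forall>X\<in>set Xs. em_sset X" and f: "(f, y) \<in> qcar Xs m"
    and S: "\<And>k i. k \<le> m \<Longrightarrow> i < length Xs \<Longrightarrow> infinite (- S k i) \<and> ksupp (Xs ! i) m k (S k i) (y ! i)"
    and G_inf: "\<And>k i. k \<le> m \<Longrightarrow> i < length Xs \<Longrightarrow> infinite (G k i)"
    and G_disj: "\<And>k. k \<le> m \<Longrightarrow> disjoint_family_on (G k) {..<length Xs}"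
    and G_sep: "\<And>k i j. k \<le> m \<Longrightarrow> i < length Xs \<Longrightarrow> j < length Xs \<Longrightarrow> G k i \<inter> (f ! k ! j) ` S k j = {}"
    and T: "\<And>k i. k \<le> m \<Longrightarrow> i < length Xs \<Longrightarrow> infinite (T k i) \<and> T k i \<subseteq> G k i \<inter> range (f ! k ! i)"
  shows "qrel Xs m (f, y) (map (\<lambda>k. patch (f ! k) (S k) (G k)) [0..<Suc m], y)"
proof -
  let ?n = "length Xs"
  \<comment> \<open>The patch with targets T factors through both f and the patch with targets G.\<close>
  define z where "z U = map (\<lambda>k. patch (f ! k) (S k) (U k)) [0..<Suc m]" for U
  have f_length: "length (f ! k) = ?n" if "k \<le> m" for k
    using f that by (simp add: qcar_iff einj_length)
  have z_agree: "(z U ! k ! i) s = (f ! k ! i) s" if "k \<le> m" "i < ?n" "s \<in> S k i" for U k i s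
    using that f_length by (simp add: z_def less_Suc_eq_le patch_nth_agree)
  have z_range: "range (z U ! k ! i) = (f ! k ! i) ` S k i \<union> U k i"
    if "k \<le> m" "i < ?n" "infinite (U k i)" for U k i
    using that S f_length by (simp add: z_def less_Suc_eq_le range_patch_nth)
  have T_disj: "disjoint_family_on (T k) {..<?n}" if "k \<le> m" for k
  proof (rule disjoint_family_on_bisimulation[OF G_disj[OF that]])
    fix i j assume "i \<in> {..<?n}" "j \<in> {..<?n}" "G k i \<inter> G k j = {}"
    then show "T k i \<inter> T k j = {}" using T[OF that] by blast
  qed
  have T_sep: "T k i \<inter> (f ! k ! j) ` S k j = {}" if "k \<le> m" "i < ?n" "j < ?n" for k i j
    using G_sep[OF that] T[OF that(1,2)] by blast
  have zG: "(z G, y) \<in> qcar Xs m"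
    unfolding z_def using S G_inf by (intro qcar_patch[OF f _ G_disj G_sep]) auto
  have zT: "(z T, y) \<in> qcar Xs m"
    unfolding z_def using S T by (intro qcar_patch[OF f _ T_disj T_sep]) auto
  have range_zT:
    "range (z T ! k ! i) \<subseteq> range (f ! k ! i)" "range (z T ! k ! i) \<subseteq> range (z G ! k ! i)"
    if "k \<le> m" "i < ?n" for k i
    using z_range[OF that, of T] z_range[OF that, of G] T[OF that] G_inf[OF that] by auto
  have "qgen Xs m (f, y) (z T, y)"
    by (rule qgen_if_range_subset[OF ES f zT, where S=S]) (simp_all add: S z_agree range_zT)
  moreover have "qgen Xs m (z G, y) (z T, y)"
    by (rule qgen_if_range_subset[OF ES zG zT, where S=S]) (simp_all add: S z_agree range_zT)
  ultimately show ?thesis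
    unfolding z_def by (meson qrel_if_qgen qrel_sym qrel_trans)
qed

lemma qrel_if_agree_on_supports:
  assumes ES: "\<forall>X\<in>set Xs. em_sset X" and e: "(e, y) \<in> qcar Xs m" and e': "(e', y) \<in> qcar Xs m"
    and S: "\<And>k i. k \<le> m \<Longrightarrow> i < length Xs \<Longrightarrow> infinite (- S k i) \<and> ksupp (Xs ! i) m k (S k i) (y ! i)"
    and agree: "\<And>k i s. k \<le> m \<Longrightarrow> i < length Xs \<Longrightarrow> s \<in> S k i \<Longrightarrow> (e ! k ! i) s = (e' ! k ! i) s"
  shows "qrel Xs m (e, y) (e', y)"
proof -
  let ?n = "length Xs"
  have einj: "einj ?n (e ! k)" "einj ?n (e' ! k)" if "k \<le> m" for k
    using e e' that by (auto simp: qcar_iff)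
  obtain E E' where
    EE': "\<And>k i. k \<le> m \<Longrightarrow> i < ?n \<Longrightarrow> E k i \<subseteq> (e ! k ! i) ` (- S k i) \<and> infinite (E k i) \<and>
      E' k i \<subseteq> (e' ! k ! i) ` (- S k i) \<and> infinite (E' k i)" and
    disj: "\<And>k. k \<le> m \<Longrightarrow> disjoint_family_on (\<lambda>i. E k i \<union> E' k i) {..<?n}"
  proof (rule disjoint_infinite_subset_pairs)
    show "infinite ((e ! k ! i) ` (- S k i)) \<and> infinite ((e' ! k ! i) ` (- S k i))"
      if "k \<le> m" "i < ?n" for k i
      using S[OF that] einj_inj_nth[OF einj(1)[OF that(1)] that(2)]
        einj_inj_nth[OF einj(2)[OF that(1)] that(2)]
      by (simp add: infinite_image_inj)
  qed (rule that)
  define G where "G k = (\<lambda>i. E k i \<union> E' k i)" for k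
  have ranges: "E k i \<subseteq> range (e ! k ! i)" "E' k i \<subseteq> range (e' ! k ! i)" if "k \<le> m" "i < ?n" for k i
    using EE'[OF that] by auto
  have sep: "G k i \<inter> (e ! k ! j) ` S k j = {}" "G k i \<inter> (e' ! k ! j) ` S k j = {}"
    if "k \<le> m" "i < ?n" "j < ?n" for k i j
    using compl_images_disjoint_image[OF einj(1)[OF that(1)] einj(2)[OF that(1)] that(2,3),
        where S="S k", OF agree[OF that(1,3)]]
      compl_images_disjoint_image[OF einj(2)[OF that(1)] einj(1)[OF that(1)] that(2,3),
        where S="S k", OF agree[OF that(1,3), symmetric]]
      EE'[OF that(1,2)]
    unfolding G_def by blast+
  have "map (\<lambda>k. patch (e' ! k) (S k) (G k)) [0..<Suc m] =
    map (\<lambda>k. patch (e ! k) (S k) (G k)) [0..<Suc m]"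
  proof (rule map_cong[OF refl])
    fix k assume "k \<in> set [0..<Suc m]"
    then have k: "k \<le> m" by simp
    show "patch (e' ! k) (S k) (G k) = patch (e ! k) (S k) (G k)"
      using einj_length[OF einj(1)[OF k]] einj_length[OF einj(2)[OF k]] agree[OF k]
      by (intro patch_cong) auto
  qed
  moreover have "qrel Xs m (e, y) (map (\<lambda>k. patch (e ! k) (S k) (G k)) [0..<Suc m], y)"
    by (rule qrel_patch[OF ES e S, where T=E]) (use EE' ranges disj sep in \<open>auto simp: G_def\<close>)
  moreover have "qrel Xs m (e', y) (map (\<lambda>k. patch (e' ! k) (S k) (G k)) [0..<Suc m], y)"
    by (rule qrel_patch[OF ES e' S, where T=E']) (use EE' ranges disj sep in \<open>auto simp: G_def\<close>)
  ultimately show ?thesis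
    by (metis qrel_sym qrel_trans)
qed

section \<open>Supports in mild $E\mathcal M$-simplicial sets\<close>

definition some_support :: "'a emsset \<Rightarrow> nat \<Rightarrow> nat \<Rightarrow> 'a \<Rightarrow> nat set" where
  "some_support X m k x = (SOME A. infinite (- A) \<and> ksupp X m k A x)"

lemma some_support:
  assumes "mild X" and "x \<in> simp X m" and "k \<le> m"
  shows "infinite (- some_support X m k x)" and "ksupp X m k (some_support X m k x) x"
  using someI_ex[of "\<lambda>A. infinite (- A) \<and> ksupp X m k A x"] assms
  unfolding mild_def some_support_def by blast+

lemma sact_eq_if_agree_on_supports:
  assumes X: "em_sset X" and x: "x \<in> simp X m" and a: "em_elem m a" and b: "em_elem m b"
    and S: "\<And>k. k \<le> m \<Longrightarrow> infinite (- S k) \<and> ksupp X m k (S k) x"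
    and agree: "\<And>k s. k \<le> m \<Longrightarrow> s \<in> S k \<Longrightarrow> (a ! k) s = (b ! k) s"
  shows "sact X m a x = sact X m b x"
proof -
  \<comment> \<open>The case of the single factor X, evaluated by Phi.\<close>
  define lift where "lift c = map (\<lambda>k. [c ! k]) [0..<Suc m]" for c :: "(nat \<Rightarrow> nat) list"
  have lift_qcar: "(lift c, [x]) \<in> qcar [X] m" if "em_elem m c" for c
    using x em_elem_inj_nth[OF that] unfolding qcar_iff lift_def
    by (auto simp: less_Suc_eq_le inj_eq intro!: einjI)
  have Phi_lift: "Phi [X] m (lift c, [x]) ! 0 = sact X m c x" if "em_elem m c" for c
  proof -
    have "map (\<lambda>k. lift c ! k ! 0) [0..<Suc m] = c"
      using em_elem_length[OF that] by (intro nth_equalityI) (auto simp: lift_def)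
    then show ?thesis by (simp add: Phi_nth)
  qed
  have "qrel [X] m (lift a, [x]) (lift b, [x])"
    using X S agree
    by (intro qrel_if_agree_on_supports[where S="\<lambda>k i. S k"] lift_qcar a b)
      (auto simp: lift_def less_Suc_eq_le)
  then have "Phi [X] m (lift a, [x]) = Phi [X] m (lift b, [x])"
    using X by (simp add: Phi_eq_if_qrel)
  then show ?thesis
    using Phi_lift[OF a] Phi_lift[OF b] by simp
qed

lemma sact_incl_k_eq_if_agree:
  assumes X: "em_sset X" and mX: "mild X" and x: "x \<in> simp X m" and k: "k \<le> m"
    and u: "inj u" and v: "inj v" and T: "infinite (- T)" "ksupp X m k T x"
    and agree: "\<And>t. t \<in> T \<Longrightarrow> u t = v t"
  shows "sact X m (incl_k m k u) x = sact X m (incl_k m k v) x"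
proof (rule sact_eq_if_agree_on_supports[OF X x em_elem_incl_k[OF u] em_elem_incl_k[OF v]])
  let ?S = "\<lambda>j. if j = k then T else some_support X m j x"
  show "infinite (- ?S j) \<and> ksupp X m j (?S j) x" if "j \<le> m" for j
    using T some_support[OF mX x that] by simp
  show "(incl_k m k u ! j) s = (incl_k m k v ! j) s" if "j \<le> m" "s \<in> ?S j" for j s
    using that agree by (simp add: incl_k_nth split: if_splits)
qed

lemma ksupp_Int:
  assumes X: "em_sset X" and mX: "mild X" and x: "x \<in> simp X m" and k: "k \<le> m"
    and A: "infinite (- A)" "ksupp X m k A x" and B: "infinite (- B)" "ksupp X m k B x"
  shows "ksupp X m k (A \<inter> B) x"
  unfolding ksupp_def
proof (intro allI impI, elim conjE)
  fix u :: "nat \<Rightarrow> nat" assume u: "inj u" and u_fix: "\<forall>a\<in>A \<inter> B. u a = a"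
  let ?act = "\<lambda>w. sact X m (incl_k m k w) x"
  have "u ` (- A) \<subseteq> - u ` A" and "infinite (u ` (- A))"
    using u A(1) by (auto simp: inj_eq infinite_image_inj)
  then obtain Z where Z: "Z \<subseteq> - u ` A" "infinite Z" "infinite (- B - Z)"
    using infinite_subset_with_infinite_remainder B(1) by (metis finite_subset)
  define g where "g = enumerate Z"
  define h where "h = enumerate (- B - Z)"
  have g: "inj g" "range g \<subseteq> Z" and h: "inj h" "range h \<subseteq> - B - Z"
    unfolding g_def h_def using Z by (simp_all add: inj_enumerate range_enumerate)
  \<comment> \<open>u is joined to id by injections that agree alternately on A and on B.\<close>
  define v1 where "v1 t = (if t \<in> A then u t else g t)" for t
  define v2 where "v2 t = (if t \<in> B then v1 t else h t)" for t
  define v3 where "v3 t = (if t \<in> B then t else h t)" for t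
  have v1: "inj v1"
    unfolding v1_def using u g Z(1) by (intro inj_piecewise) (auto intro: inj_on_subset)
  have "v1 ` B \<subseteq> B \<union> Z"
    using u_fix g(2) by (auto simp: v1_def)
  then have v2: "inj v2"
    unfolding v2_def using v1 h by (intro inj_piecewise) (auto intro: inj_on_subset)
  have v3: "inj v3"
    unfolding v3_def using h by (intro inj_piecewise) (auto intro: inj_on_subset)
  have "?act u = ?act v1"
    using A by (intro sact_incl_k_eq_if_agree[OF X mX x k u v1]) (auto simp: v1_def)
  also have "\<dots> = ?act v2"
    using B by (intro sact_incl_k_eq_if_agree[OF X mX x k v1 v2]) (auto simp: v2_def)
  also have "\<dots> = ?act v3"
    using A u_fix
    by (intro sact_incl_k_eq_if_agree[OF X mX x k v2 v3]) (auto simp: v1_def v2_def v3_def)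
  also have "\<dots> = ?act id"
    using B by (intro sact_incl_k_eq_if_agree[OF X mX x k v3 inj_on_id]) (auto simp: v3_def)
  also have "\<dots> = x"
    using em_sset_act_id[OF X x] by (simp add: incl_k_id)
  finally show "?act u = x" .
qed

lemma ksupp_image_sact:
  assumes X: "em_sset X" and mX: "mild X" and x: "x \<in> simp X m" and a: "em_elem m a" and k: "k \<le> m"
    and B: "infinite (- B)" "ksupp X m k B x"
  shows "ksupp X m k ((a ! k) ` B) (sact X m a x)"
  unfolding ksupp_def
proof (intro allI impI, elim conjE)
  fix u :: "nat \<Rightarrow> nat" assume u: "inj u" and u_fix: "\<forall>b\<in>(a ! k) ` B. u b = b"
  define a' where "a' = map2 (\<circ>) (incl_k m k u) a"
  have a'_nth: "a' ! j = (if j = k then u \<circ> a ! j else a ! j)" if "j \<le> m" for j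
    using that em_elem_length[OF a] by (simp add: a'_def incl_k_nth less_Suc_eq_le)
  have a': "em_elem m a'"
    using em_elem_length[OF a] em_elem_inj_nth[OF a] u
    by (auto simp: em_elem_def in_set_conv_nth a'_def incl_k_nth less_Suc_eq_le inj_compose)
  have "sact X m (incl_k m k u) (sact X m a x) = sact X m a' x"
    unfolding a'_def by (rule em_sset_act_comp[OF X em_elem_incl_k[OF u] a x])
  also have "\<dots> = sact X m a x"
  proof (rule sact_eq_if_agree_on_supports[OF X x a' a])
    let ?S = "\<lambda>j. if j = k then B else some_support X m j x"
    show "infinite (- ?S j) \<and> ksupp X m j (?S j) x" if "j \<le> m" for j
      using B some_support[OF mX x that] by simp
    show "(a' ! j) s = (a ! j) s" if "j \<le> m" "s \<in> ?S j" for j s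
      using that u_fix by (simp add: a'_nth split: if_splits)
  qed
  finally show "sact X m (incl_k m k u) (sact X m a x) = sact X m a x" .
qed

section \<open>The image of $\Phi$ and its fibres\<close>

definition disjoint_supports ::
    "'a emsset list \<Rightarrow> nat \<Rightarrow> nat \<Rightarrow> (nat \<Rightarrow> nat set) \<Rightarrow> 'a list \<Rightarrow> bool" where
  "disjoint_supports Xs m k A y \<longleftrightarrow> disjoint_family_on A {..<length Xs} \<and>
     infinite (- (\<Union>i<length Xs. A i)) \<and> (\<forall>i<length Xs. ksupp (Xs ! i) m k (A i) (y ! i))"

lemma disjoint_supportsD:
  assumes "disjoint_supports Xs m k A y" and "i < length Xs"
  shows "infinite (- A i)" and "ksupp (Xs ! i) m k (A i) (y ! i)"
proof -
  have "- (\<Union>i<length Xs. A i) \<subseteq> - A i" using assms(2) by blast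
  then show "infinite (- A i)" using assms(1) finite_subset unfolding disjoint_supports_def by blast
  show "ksupp (Xs ! i) m k (A i) (y ! i)" using assms unfolding disjoint_supports_def by blast
qed

lemma box_iff:
  "y \<in> box Xs m \<longleftrightarrow> length y = length Xs \<and> (\<forall>i<length Xs. y ! i \<in> simp (Xs ! i) m) \<and>
     (\<forall>k\<le>m. \<exists>A. disjoint_supports Xs m k A y)"
  by (simp add: box_def disjoint_supports_def disjoint_family_on_def Ball_def)

definition transported_support ::
    "'a emsset list \<Rightarrow> nat \<Rightarrow> (nat \<Rightarrow> nat) list list \<Rightarrow> 'a list \<Rightarrow> nat \<Rightarrow> nat \<Rightarrow> nat set" where
  "transported_support Xs m f x k i = (f ! k ! i) ` some_support (Xs ! i) m k (x ! i)"

lemma disjoint_supports_Phi: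
  assumes EM: "\<forall>X\<in>set Xs. em_sset X \<and> mild X" and p: "(f, x) \<in> qcar Xs m" and k: "k \<le> m"
  shows "disjoint_supports Xs m k (transported_support Xs m f x k) (Phi Xs m (f, x))"
proof -
  let ?n = "length Xs"
  let ?B = "\<lambda>i. some_support (Xs ! i) m k (x ! i)"
  have f: "einj ?n (f ! k)" using p k by (simp add: qcar_iff)
  have B: "infinite (- ?B i)" "ksupp (Xs ! i) m k (?B i) (x ! i)" if "i < ?n" for i
    using some_support[OF _ qcar_nth_in_simp[OF p that] k] EM that by simp_all
  have "disjoint_family_on (transported_support Xs m f x k) {..<?n}"
    unfolding disjoint_family_on_def transported_support_def
  proof (intro ballI impI)
    fix i j assume "i \<in> {..<?n}" "j \<in> {..<?n}" "i \<noteq> j"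
    then show "(f ! k ! i) ` ?B i \<inter> (f ! k ! j) ` ?B j = {}"
      using einj_images_disjoint[OF f, of i j] by simp
  qed
  moreover have "infinite (- (\<Union>i<?n. transported_support Xs m f x k i))"
  proof (cases "?n = 0")
    case False
    then have "(f ! k ! 0) ` (- ?B 0) \<inter> transported_support Xs m f x k i = {}" if "i < ?n" for i
      using einj_images_disjoint[OF f _ that, of 0 "- ?B 0"]
      unfolding transported_support_def by simp
    then have "(f ! k ! 0) ` (- ?B 0) \<subseteq> - (\<Union>i<?n. transported_support Xs m f x k i)"
      by blast
    moreover have "infinite ((f ! k ! 0) ` (- ?B 0))"
      using B(1) False einj_inj_nth[OF f] by (simp add: infinite_image_inj)
    ultimately show ?thesis by (meson finite_subset)
  qed simp
  moreover have "ksupp (Xs ! i) m k (transported_support Xs m f x k i) (Phi Xs m (f, x) ! i)"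
    if "i < ?n" for i
    using ksupp_image_sact[OF _ _ qcar_nth_in_simp[OF p that] qcar_em_elem_column[OF p that] k
        B[OF that]]
      EM that k by (simp add: transported_support_def Phi_nth less_Suc_eq_le)
  ultimately show ?thesis
    unfolding disjoint_supports_def by blast
qed

lemma einj_id_on_representative:
  assumes ES: "\<forall>X\<in>set Xs. em_sset X"
    and y: "length y = length Xs" "\<And>i. i < length Xs \<Longrightarrow> y ! i \<in> simp (Xs ! i) m"
    and A: "\<And>k. k \<le> m \<Longrightarrow> disjoint_supports Xs m k (A k) y"
  defines "e \<equiv> map (\<lambda>k. einj_id_on (length Xs) (A k)) [0..<Suc m]"
  shows "(e, y) \<in> qcar Xs m" and "Phi Xs m (e, y) = y"
proof -
  have "einj (length Xs) (einj_id_on (length Xs) (A k))" if "k \<le> m" for k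
    using A[OF that] by (simp add: disjoint_supports_def einj_einj_id_on)
  then show e: "(e, y) \<in> qcar Xs m"
    using y by (simp add: qcar_iff e_def less_Suc_eq_le)
  show "Phi Xs m (e, y) = y"
  proof (rule nth_equalityI)
    fix i assume "i < length (Phi Xs m (e, y))"
    then have i: "i < length Xs" by simp
    have "sact (Xs ! i) m (map (\<lambda>k. e ! k ! i) [0..<Suc m]) (y ! i) = y ! i"
    proof (rule sact_eq_self_if_fixes_supports[where S="\<lambda>k. A k i"])
      show "em_sset (Xs ! i)" using ES i by simp
      show "y ! i \<in> simp (Xs ! i) m" using y(2)[OF i] .
      show "em_elem m (map (\<lambda>k. e ! k ! i) [0..<Suc m])" using qcar_em_elem_column[OF e i] .
      show "ksupp (Xs ! i) m k (A k i) (y ! i)" if "k \<le> m" for k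
        using A[OF that] i by (simp add: disjoint_supports_def)
      show "(map (\<lambda>k. e ! k ! i) [0..<Suc m] ! k) s = s" if "k \<le> m" "s \<in> A k i" for k s
        using that i by (simp add: e_def less_Suc_eq_le einj_id_on_apply)
    qed
    then show "Phi Xs m (e, y) ! i = y ! i"
      using i by (simp add: Phi_nth)
  qed (simp add: y)
qed

lemma Phi_image_eq_box:
  assumes EM: "\<forall>X\<in>set Xs. em_sset X \<and> mild X"
  shows "Phi Xs m ` qcar Xs m = box Xs m"
proof
  show "Phi Xs m ` qcar Xs m \<subseteq> box Xs m"
  proof
    fix y assume "y \<in> Phi Xs m ` qcar Xs m"
    then obtain f x where p: "(f, x) \<in> qcar Xs m" and y: "y = Phi Xs m (f, x)" by auto
    have "\<forall>X\<in>set Xs. em_sset X" using EM by blast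
    then show "y \<in> box Xs m"
      unfolding box_iff y using Phi_nth_in_simp[OF _ p] disjoint_supports_Phi[OF EM p] by auto
  qed
  show "box Xs m \<subseteq> Phi Xs m ` qcar Xs m"
  proof
    fix y assume "y \<in> box Xs m"
    then obtain A where A: "\<And>k. k \<le> m \<Longrightarrow> disjoint_supports Xs m k (A k) y"
      and y: "length y = length Xs" "\<And>i. i < length Xs \<Longrightarrow> y ! i \<in> simp (Xs ! i) m"
      unfolding box_iff by metis
    have "\<forall>X\<in>set Xs. em_sset X" using EM by blast
    from einj_id_on_representative[OF this y A] show "y \<in> Phi Xs m ` qcar Xs m"
      by (metis image_eqI)
  qed
qed

lemma qrel_einj_id_on_representative:
  assumes EM: "\<forall>X\<in>set Xs. em_sset X \<and> mild X" and p: "(f, x) \<in> qcar Xs m"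
  defines "e \<equiv> map (\<lambda>k. einj_id_on (length Xs) (transported_support Xs m f x k)) [0..<Suc m]"
  shows "(e, Phi Xs m (f, x)) \<in> qcar Xs m" and "qrel Xs m (f, x) (e, Phi Xs m (f, x))"
proof -
  let ?n = "length Xs"
  let ?B = "\<lambda>k i. some_support (Xs ! i) m k (x ! i)"
  have ES: "\<forall>X\<in>set Xs. em_sset X" using EM by blast
  show e_y: "(e, Phi Xs m (f, x)) \<in> qcar Xs m"
    unfolding e_def
    using einj_id_on_representative(1)[OF ES] disjoint_supports_Phi[OF EM p] Phi_nth_in_simp[OF ES p]
    by simp
  have e_einj: "einj ?n (e ! k)" if "k \<le> m" for k
    using e_y that by (simp add: qcar_iff)
  \<comment> \<open>c = e o f agrees with f on the supports of x, as e is the identity on their images.\<close>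
  define c where "c = map (\<lambda>k. map (\<lambda>j. (e ! k ! j) \<circ> (f ! k ! j)) [0..<?n]) [0..<Suc m]"
  have c_x: "(c, x) \<in> qcar Xs m"
    using p e_einj by (auto simp: c_def qcar_iff less_Suc_eq_le einj_inj_nth intro!: einj_comp)
  have "qgen Xs m (e, Phi Xs m (f, x)) (c, x)"
    unfolding c_def using e_y p by (intro qgen_comp_Phi) (simp_all add: qcar_iff)
  moreover have "qrel Xs m (c, x) (f, x)"
  proof (rule qrel_if_agree_on_supports[OF ES c_x p, where S="?B"])
    show "infinite (- ?B k i) \<and> ksupp (Xs ! i) m k (?B k i) (x ! i)" if "k \<le> m" "i < ?n" for k i
      using some_support[OF _ qcar_nth_in_simp[OF p that(2)] that(1)] EM that(2) by simp
    show "(c ! k ! i) s = (f ! k ! i) s" if "k \<le> m" "i < ?n" "s \<in> ?B k i" for k i s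
      using that by (simp add: c_def e_def less_Suc_eq_le einj_id_on_apply transported_support_def)
  qed
  ultimately show "qrel Xs m (f, x) (e, Phi Xs m (f, x))"
    by (meson qrel_if_qgen qrel_sym qrel_trans)
qed

lemma qrel_if_Phi_eq:
  assumes EM: "\<forall>X\<in>set Xs. em_sset X \<and> mild X" and p: "p \<in> qcar Xs m" and q: "q \<in> qcar Xs m"
    and eq: "Phi Xs m p = Phi Xs m q"
  shows "qrel Xs m p q"
proof -
  obtain f x f' x' where pq: "p = (f, x)" "q = (f', x')" by fastforce
  let ?n = "length Xs"
  let ?y = "Phi Xs m p"
  let ?D = "transported_support Xs m f x" and ?D' = "transported_support Xs m f' x'"
  define e where "e = map (\<lambda>k. einj_id_on ?n (?D k)) [0..<Suc m]"
  define e' where "e' = map (\<lambda>k. einj_id_on ?n (?D' k)) [0..<Suc m]"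
  have ES: "\<forall>X\<in>set Xs. em_sset X" using EM by blast
  have e: "(e, ?y) \<in> qcar Xs m" "qrel Xs m p (e, ?y)"
    using qrel_einj_id_on_representative[OF EM p[unfolded pq]] by (simp_all add: e_def pq)
  have e': "(e', ?y) \<in> qcar Xs m" "qrel Xs m q (e', ?y)"
    using qrel_einj_id_on_representative[OF EM q[unfolded pq]]
    by (simp_all add: e'_def pq eq[unfolded pq, symmetric])
  have D: "disjoint_supports Xs m k (?D k) ?y" and D': "disjoint_supports Xs m k (?D' k) ?y"
    if "k \<le> m" for k
    using disjoint_supports_Phi[OF EM p[unfolded pq] that]
      disjoint_supports_Phi[OF EM q[unfolded pq] that]
    by (simp_all add: pq eq[unfolded pq, symmetric])
  have "qrel Xs m (e, ?y) (e', ?y)"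
  proof (rule qrel_if_agree_on_supports[OF ES e(1) e'(1), where S="\<lambda>k i. ?D k i \<inter> ?D' k i"])
    fix k i assume k: "k \<le> m" and i: "i < ?n"
    have X: "em_sset (Xs ! i)" "mild (Xs ! i)" and y: "?y ! i \<in> simp (Xs ! i) m"
      using EM i e(1) by (auto simp: qcar_nth_in_simp)
    note D_i = disjoint_supportsD[OF D[OF k] i] and D'_i = disjoint_supportsD[OF D'[OF k] i]
    show "infinite (- (?D k i \<inter> ?D' k i)) \<and> ksupp (Xs ! i) m k (?D k i \<inter> ?D' k i) (?y ! i)"
      using D_i(1) ksupp_Int[OF X y k D_i D'_i] by (simp add: Compl_Int)
    show "(e ! k ! i) s = (e' ! k ! i) s" if "s \<in> ?D k i \<inter> ?D' k i" for s
      using k i that by (simp add: e_def e'_def less_Suc_eq_le einj_id_on_apply)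
  qed
  then show ?thesis
    using e(2) e'(2) by (meson qrel_sym qrel_trans)
qed

theorem theorem2p25:
  fixes Xs :: "'a emsset list"
  assumes "\<forall>X\<in>set Xs. em_sset X \<and> mild X"
  shows
    \<comment> \<open>Phi is well defined on the quotient\<close>
    "(\<forall>m p q. p \<in> qcar Xs m \<and> q \<in> qcar Xs m \<and> qrel Xs m p q \<longrightarrow> Phi Xs m p = Phi Xs m q)
    \<comment> \<open>Phi is a map of EM-simplicial sets\<close>
   \<and> (\<forall>m \<alpha> p. simp_op m \<alpha> \<and> p \<in> qcar Xs m \<longrightarrow>
         Phi Xs (length \<alpha> - 1) (qsmap Xs m \<alpha> p) = map (\<lambda>j. smap (Xs ! j) m \<alpha> (Phi Xs m p ! j)) [0..<length Xs])
   \<and> (\<forall>m v p. em_elem m v \<and> p \<in> qcar Xs m \<longrightarrow>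
         Phi Xs m (qact m v p) = map (\<lambda>j. sact (Xs ! j) m v (Phi Xs m p ! j)) [0..<length Xs])
    \<comment> \<open>its image is exactly the unbiased box product\<close>
   \<and> (\<forall>m. Phi Xs m ` qcar Xs m = box Xs m)
    \<comment> \<open>and it is injective on equivalence classes\<close>
   \<and> (\<forall>m. \<forall>p\<in>qcar Xs m. \<forall>q\<in>qcar Xs m. Phi Xs m p = Phi Xs m q \<longrightarrow> qrel Xs m p q)"
proof -
  have ES: "\<forall>X\<in>set Xs. em_sset X" using assms by blast
  show ?thesis
    using Phi_eq_if_qrel[OF ES] Phi_qsmap[OF ES] Phi_qact[OF ES]
      Phi_image_eq_box[OF assms] qrel_if_Phi_eq[OF assms] by blast
qed

end
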